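(* Under the hypotheses of Theorem 4 (stated in the context), define $\bar{\boldsymbol\rho}_\star\in\mathbb C^N$ by $$(\bar{\boldsymbol\rho}_\star)_j=\sum_{q:\ \vec{\mathbf z}_q\in\mathcal B_r(\vec{\mathbf z}_j)}(\boldsymbol\rho_\star)_q\,\langle\mathbf g_j,\mathbf g_q\rangle\ \ \text{for } j\in\mathcal S,\qquad(\bar{\boldsymbol\rho}_\star)_j=0\ \ \text{for } j\notin\mathcal S.$$ Then $$\|\boldsymbol\rho-\bar{\boldsymbol\rho}_\star\|_1\le\frac{2\,\mathcal I(\mathcal Y)}{r}\,\|\boldsymbol\rho\|_1.$$
   Context: Let $W$ be a set (the imaging region) and $M\ge1$. For each $\vec{\mathbf y}\in W$ let $\mathbf g_{\vec{\mathbf y}}\in\mathbb C^M$ be a vector with $\|\mathbf g_{\vec{\mathbf y}}\|_2=1$. Let $\vec{\mathbf z}_1,\dots,\vec{\mathbf z}_N\in W$ be distinct (grid) points, write $\mathbf g_j=\mathbf g_{\vec{\mathbf z}_j}$, and let $\mathcal G\in\mathbb C^{M\times N}$ be the matrix with columns $\mathbf g_j$. Inner product: $\langle\mathbf u,\mathbf v\rangle=\mathbf u^H\mathbf v=\sum_i\overline{u_i}v_i$. $\|\cdot\|_1$ is the $\ell_1$ norm. Semi-metric: $\mathscr D(\vec{\mathbf y},\vec{\mathbf y}')=1-|\langle\mathbf g_{\vec{\mathbf y}},\mathbf g_{\vec{\mathbf y}'}\rangle|$; ball $\mathcal B_r(\vec{\mathbf y})=\{\vec{\mathbf y}'\in W:\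 \mathscr D(\vec{\mathbf y},\vec{\mathbf y}')<r\}$. Interaction coefficient: for a finite set $\mathcal Y\subset W$ and each $q$, let $\mathscr N(\vec{\mathbf z}_q)\in\mathcal Y$ be a point of $\mathcal Y$ minimizing $\mathscr D(\vec{\mathbf z}_q,\cdot)$ over $\mathcal Y$; then $\mathcal I(\mathcal Y)=\max_{q=1,\dots,N}\sum_{\vec{\mathbf y}\in\mathcal Y\setminus\{\mathscr N(\vec{\mathbf z}_q)\}}|\langle\mathbf g_{\vec{\mathbf y}},\mathbf g_q\rangle|$. Hypotheses of Theorem 4: $\mathcal S\subset\{1,\dots,N\}$ with $|\mathcal S|=s$; $\boldsymbol\rho\in\mathbb C^N$ supported in $\mathcal S$; $\mathbf d=\mathcal G\boldsymbol\rho$; $\mathcal Y=\{\vec{\mathbf z}_j:j\in\mathcal S\}$; $r\in(0,1)$ with the balls $\mathcal B_r(\vec{\mathbf z}_j)$, $j\in\mathcal S$, pairwise disjoint; $\boldsymbol\rho_\star$ is a minimizer of $\|\mathbf x\|_1$ over $\mathbf x\in\mathbb C^N$ subject to $\mathcal G\mathbf x=\mathbf d$. *)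

theory Defs
  imports "HOL-Analysis.Analysis"
begin

definition hip :: "complex^'m \<Rightarrow> complex^'m \<Rightarrow> complex" where
  "hip u v = (\<Sum>i\<in>UNIV. cnj (u $ i) * v $ i)"

definition l1norm :: "complex^'n \<Rightarrow> real" where
  "l1norm x = (\<Sum>j\<in>UNIV. norm (x $ j))"

definition semimetric :: "('a \<Rightarrow> complex^'m) \<Rightarrow> 'a \<Rightarrow> 'a \<Rightarrow> real" where
  "semimetric g y y' = 1 - norm (hip (g y) (g y'))"

definition sball :: "'a set \<Rightarrow> ('a \<Rightarrow> complex^'m) \<Rightarrow> real \<Rightarrow> 'a \<Rightarrow> 'a set" where
  "sball W g r y = {y'\<in>W. semimetric g y y' < r}"

definition Gmat :: "('a \<Rightarrow> complex^'m) \<Rightarrow> ('n \<Rightarrow> 'a) \<Rightarrow> complex^'n^'m" where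
  "Gmat g z = (\<chi> i j. g (z j) $ i)"

definition nearest_choice ::
  "('a \<Rightarrow> complex^'m) \<Rightarrow> ('n \<Rightarrow> 'a) \<Rightarrow> 'a set \<Rightarrow> ('n \<Rightarrow> 'a) \<Rightarrow> bool" where
  "nearest_choice g z Y nn \<longleftrightarrow>
     (\<forall>q. nn q \<in> Y \<and> (\<forall>y\<in>Y. semimetric g (z q) (nn q) \<le> semimetric g (z q) y))"

definition interaction ::
  "('a \<Rightarrow> complex^'m) \<Rightarrow> ('n::finite \<Rightarrow> 'a) \<Rightarrow> 'a set \<Rightarrow> ('n \<Rightarrow> 'a) \<Rightarrow> real" where
  "interaction g z Y nn =
     Max ((\<lambda>q. \<Sum>y\<in>Y - {nn q}. norm (hip (g y) (g (z q)))) ` UNIV)"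

end

theory Submission
  imports Defs
begin

text \<open>
  Write h j q for the coherence <g_j, g_q>. Testing G rho_star = G rho against g_j for j in S
  gives the row identity  rho_j = (sum over q of rho_star_q h j q) - (sum over k in S - {j} of
  rho_k h j k).  The point of Y nearest to z_q has the largest coherence with g_q, so every
  column sum  (sum over j in S of |h j q|)  is at most I + 1, and at most I + 1 - r when z_q lies
  in no ball; disjointness of the balls makes z_k its own nearest point for k in S.
  Summing the row identity over S therefore bounds |rho - rho_bar|_1 by
  I |rho_star|_1 + (1 - r) m + I |rho|_1, and |rho|_1 by (I + 1) |rho_star|_1 - r m + I |rho|_1,
  where m is the mass of rho_star outside all balls. With |rho_star|_1 <= |rho|_1 the second
  bound gives r m <= 2 I |rho|_1, and the first then yields the claim.
\<close>

lemma hip_commute: "hip v u = cnj (hip u v)"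
  unfolding hip_def by (simp add: mult.commute)

lemma norm_hip_commute: "norm (hip v u) = norm (hip u v)"
  by (subst hip_commute) simp

lemma norm_hip_le: "norm (hip u v) \<le> norm u * norm v"
proof -
  have "norm (hip u v) \<le> (\<Sum>i\<in>UNIV. norm (cnj (u $ i) * v $ i))"
    unfolding hip_def by (rule norm_sum)
  also have "\<dots> = (\<Sum>i\<in>UNIV. \<bar>norm (u $ i)\<bar> * \<bar>norm (v $ i)\<bar>)"
    by (simp add: norm_mult)
  also have "\<dots> \<le> L2_set (\<lambda>i. norm (u $ i)) UNIV * L2_set (\<lambda>i. norm (v $ i)) UNIV"
    by (rule L2_set_mult_ineq)
  finally show ?thesis by (simp add: norm_vec_def)
qed

lemma hip_self: "hip u u = of_real ((norm u)\<^sup>2)"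
proof -
  have "(norm u)\<^sup>2 = (\<Sum>i\<in>UNIV. (norm (u $ i))\<^sup>2)"
    unfolding norm_vec_def L2_set_def by (simp add: sum_nonneg)
  hence "of_real ((norm u)\<^sup>2) = (\<Sum>i\<in>UNIV. (of_real ((norm (u $ i))\<^sup>2) :: complex))" by simp
  also have "\<dots> = hip u u" unfolding hip_def
    by (rule sum.cong) (auto simp: mult.commute simp flip: complex_norm_square)
  finally show ?thesis by simp
qed

lemma hip_Gmat_mult: "hip u (Gmat g z *v x) = (\<Sum>q\<in>UNIV. x $ q * hip u (g (z q)))"
proof -
  have "hip u (Gmat g z *v x) = (\<Sum>i\<in>UNIV. \<Sum>q\<in>UNIV. cnj (u $ i) * (g (z q) $ i * x $ q))"
    unfolding hip_def Gmat_def matrix_vector_mult_def by (simp add: sum_distrib_left)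
  also have "\<dots> = (\<Sum>q\<in>UNIV. \<Sum>i\<in>UNIV. cnj (u $ i) * (g (z q) $ i * x $ q))"
    by (rule sum.swap)
  also have "\<dots> = (\<Sum>q\<in>UNIV. x $ q * hip u (g (z q)))"
    unfolding hip_def by (simp add: sum_distrib_left mult.commute mult.left_commute)
  finally show ?thesis .
qed

lemma sum_UNIV_eq_sum_support:
  fixes f :: "'n::finite \<Rightarrow> 'b::comm_monoid_add"
  assumes "\<And>q. q \<notin> S \<Longrightarrow> f q = 0"
  shows "(\<Sum>q\<in>UNIV. f q) = (\<Sum>q\<in>S. f q)"
  by (rule sum.mono_neutral_right) (use assms in auto)

lemma l1norm_eq_sum_support:
  assumes "\<And>j. j \<notin> S \<Longrightarrow> x $ j = 0"
  shows "l1norm x = (\<Sum>j\<in>S. norm (x $ j))"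
  unfolding l1norm_def by (rule sum_UNIV_eq_sum_support) (simp add: assms)

lemma norm_diff_sums_le:
  fixes f :: "'a \<Rightarrow> 'c::real_normed_vector" and h :: "'b \<Rightarrow> 'c"
  shows "norm ((\<Sum>q\<in>A. f q) - (\<Sum>k\<in>B. h k)) \<le> (\<Sum>q\<in>A. norm (f q)) + (\<Sum>k\<in>B. norm (h k))"
  by (rule order_trans[OF norm_triangle_ineq4 add_mono[OF norm_sum norm_sum]])

lemma interaction_ge:
  "(\<Sum>y\<in>Y - {nn q}. norm (hip (g y) (g (z q)))) \<le> interaction g z Y nn"
  unfolding interaction_def by (rule Max_ge) auto

lemma interaction_nonneg: "0 \<le> interaction g z Y nn"
  by (rule order_trans[OF sum_nonneg interaction_ge]) simp

locale grid_imaging =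
  fixes W :: "'a set" and g :: "'a \<Rightarrow> complex^'m" and z :: "'n::finite \<Rightarrow> 'a"
    and S :: "'n set" and r :: real and nn :: "'n \<Rightarrow> 'a"
  assumes g_unit: "\<And>y. y \<in> W \<Longrightarrow> norm (g y) = 1"
    and z_in: "\<And>j. z j \<in> W"
    and z_inj: "inj z"
    and r_pos: "0 < r"
    and disj: "\<And>j k. j \<in> S \<Longrightarrow> k \<in> S \<Longrightarrow> j \<noteq> k \<Longrightarrow>
                 sball W g r (z j) \<inter> sball W g r (z k) = {}"
    and nn: "nearest_choice g z (z ` S) nn"
begin

definition coh :: "'n \<Rightarrow> 'n \<Rightarrow> complex" where
  "coh j q = hip (g (z j)) (g (z q))"

definition near :: "'n \<Rightarrow> 'n set" where
  "near j = {q. z q \<in> sball W g r (z j)}"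

definition outside :: "'n \<Rightarrow> bool" where
  "outside q \<longleftrightarrow> (\<forall>j\<in>S. q \<notin> near j)"

abbreviation "\<I> \<equiv> interaction g z (z ` S) nn"

lemma coh_self: "coh j j = 1"
  using hip_self[of "g (z j)"] g_unit z_in unfolding coh_def by simp

lemma norm_coh_le_1: "norm (coh j q) \<le> 1"
  using norm_hip_le[of "g (z j)" "g (z q)"] g_unit z_in unfolding coh_def by simp

lemma mem_near_iff: "q \<in> near j \<longleftrightarrow> 1 - norm (coh j q) < r"
  using z_in unfolding near_def sball_def semimetric_def coh_def by auto

lemma self_mem_near: "j \<in> near j"
  using r_pos by (simp add: mem_near_iff coh_self)

lemma nearest_index:
  obtains j0 where "j0 \<in> S" "nn q = z j0" "\<And>j. j \<in> S \<Longrightarrow> norm (coh j q) \<le> norm (coh j0 q)"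
    "(\<Sum>j\<in>S - {j0}. norm (coh j q)) \<le> \<I>"
proof -
  from nn obtain j0 where j0: "j0 \<in> S" "nn q = z j0"
    and le: "\<And>y. y \<in> z ` S \<Longrightarrow> semimetric g (z q) (nn q) \<le> semimetric g (z q) y"
    unfolding nearest_choice_def by blast
  have "norm (coh j q) \<le> norm (coh j0 q)" if "j \<in> S" for j
    using le[of "z j"] that j0 unfolding semimetric_def coh_def by (simp add: norm_hip_commute)
  moreover have "z ` S - {nn q} = z ` (S - {j0})"
    using j0 z_inj by (simp add: image_set_diff)
  then have "(\<Sum>j\<in>S - {j0}. norm (coh j q)) = (\<Sum>y\<in>z ` S - {nn q}. norm (hip (g y) (g (z q))))"
    using z_inj by (simp add: sum.reindex inj_on_subset coh_def)
  then have "(\<Sum>j\<in>S - {j0}. norm (coh j q)) \<le> \<I>"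
    using interaction_ge[where Y = "z ` S" and nn = nn and q = q] by simp
  ultimately show ?thesis
    using that j0 by blast
qed

text \<open>Disjointness of the balls forces z_k to be its own nearest point.\<close>
lemma column_sum_offdiag_le:
  assumes "k \<in> S"
  shows "(\<Sum>j\<in>S - {k}. norm (coh j k)) \<le> \<I>"
proof -
  obtain j0 where j0: "j0 \<in> S" "\<And>j. j \<in> S \<Longrightarrow> norm (coh j k) \<le> norm (coh j0 k)"
    and sum: "(\<Sum>j\<in>S - {j0}. norm (coh j k)) \<le> \<I>"
    using nearest_index[of k] by blast
  have "1 \<le> norm (coh j0 k)"
    using j0(2)[OF assms] by (simp add: coh_self)
  then have "k \<in> near j0"
    using r_pos by (simp add: mem_near_iff)
  then have "j0 = k"
    using disj[OF j0(1) assms] self_mem_near[of k] unfolding near_def by blast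
  with sum show ?thesis by simp
qed

lemma column_sum_le:
  "(\<Sum>j\<in>S. norm (coh j q)) \<le> \<I> + 1 - r * of_bool (outside q)"
proof -
  obtain j0 where j0: "j0 \<in> S" and sum: "(\<Sum>j\<in>S - {j0}. norm (coh j q)) \<le> \<I>"
    using nearest_index[of q] by blast
  have "norm (coh j0 q) \<le> 1 - r * of_bool (outside q)"
    using norm_coh_le_1[of j0 q] j0 by (auto simp: outside_def mem_near_iff)
  moreover have "(\<Sum>j\<in>S. norm (coh j q)) = norm (coh j0 q) + (\<Sum>j\<in>S - {j0}. norm (coh j q))"
    using j0 by (simp add: sum.remove)
  ultimately show ?thesis using sum by linarith
qed

lemma column_sum_far_le:
  "(\<Sum>j\<in>{j\<in>S. q \<notin> near j}. norm (coh j q)) \<le> \<I> + (1 - r) * of_bool (outside q)"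
proof (cases "outside q")
  case True
  then have "{j\<in>S. q \<notin> near j} = S" by (auto simp: outside_def)
  with True show ?thesis using column_sum_le[of q] by simp
next
  case False
  obtain j0 where j0: "j0 \<in> S" "\<And>j. j \<in> S \<Longrightarrow> norm (coh j q) \<le> norm (coh j0 q)"
    and sum: "(\<Sum>j\<in>S - {j0}. norm (coh j q)) \<le> \<I>"
    using nearest_index[of q] by blast
  from False obtain j1 where "j1 \<in> S" "q \<in> near j1" by (auto simp: outside_def)
  with j0 have "q \<in> near j0" by (force simp: mem_near_iff)
  then have "(\<Sum>j\<in>{j\<in>S. q \<notin> near j}. norm (coh j q)) \<le> (\<Sum>j\<in>S - {j0}. norm (coh j q))"
    by (intro sum_mono2) auto
  with sum False show ?thesis by simp
qed

end

locale l1_recovery = grid_imaging W g z S r nn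
  for W :: "'a set" and g :: "'a \<Rightarrow> complex^'m" and z :: "'n::finite \<Rightarrow> 'a"
    and S r nn +
  fixes rho rho_star :: "complex^'n"
  assumes supp: "\<And>j. j \<notin> S \<Longrightarrow> rho $ j = 0"
    and feas: "Gmat g z *v rho_star = Gmat g z *v rho"
begin

definition ball_sum :: "complex^'n" where
  "ball_sum = (\<chi> j. if j \<in> S then (\<Sum>q\<in>near j. rho_star $ q * coh j q) else 0)"

definition outside_mass :: real where
  "outside_mass = (\<Sum>q\<in>UNIV. norm (rho_star $ q) * of_bool (outside q))"

lemma row_identity:
  assumes "j \<in> S"
  shows "rho $ j = (\<Sum>q\<in>UNIV. rho_star $ q * coh j q) - (\<Sum>k\<in>S - {j}. rho $ k * coh j k)"
proof -
  have "(\<Sum>q\<in>UNIV. rho_star $ q * coh j q) = (\<Sum>q\<in>UNIV. rho $ q * coh j q)"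
    using arg_cong[OF feas, of "hip (g (z j))"] unfolding hip_Gmat_mult coh_def .
  also have "\<dots> = (\<Sum>q\<in>S. rho $ q * coh j q)"
    by (rule sum_UNIV_eq_sum_support) (simp add: supp)
  also have "\<dots> = rho $ j + (\<Sum>k\<in>S - {j}. rho $ k * coh j k)"
    using assms by (simp add: sum.remove coh_self)
  finally show ?thesis by simp
qed

lemma cross_sum_le:
  "(\<Sum>j\<in>S. \<Sum>k\<in>S - {j}. norm (rho $ k) * norm (coh j k)) \<le> \<I> * l1norm rho"
proof -
  have "(\<Sum>j\<in>S. \<Sum>k\<in>S - {j}. norm (rho $ k) * norm (coh j k))
      = (\<Sum>k\<in>S. norm (rho $ k) * (\<Sum>j\<in>S - {k}. norm (coh j k)))"
    using sum.swap_restrict[of S S "\<lambda>j k. norm (rho $ k) * norm (coh j k)" "\<lambda>j k. k \<noteq> j"]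
    by (simp add: set_diff_eq sum_distrib_left conj_commute eq_commute)
  also have "\<dots> \<le> (\<Sum>k\<in>S. \<I> * norm (rho $ k))"
    by (intro sum_mono) (simp add: column_sum_offdiag_le mult.commute mult_left_mono)
  also have "\<dots> = \<I> * l1norm rho"
    by (simp add: l1norm_eq_sum_support[of S] supp sum_distrib_left)
  finally show ?thesis .
qed

lemma l1norm_error_le:
  "l1norm (rho - ball_sum) \<le> \<I> * l1norm rho_star + (1 - r) * outside_mass + \<I> * l1norm rho"
proof -
  have row: "norm (rho $ j - ball_sum $ j)
      \<le> (\<Sum>q\<in>-near j. norm (rho_star $ q) * norm (coh j q))
        + (\<Sum>k\<in>S - {j}. norm (rho $ k) * norm (coh j k))" if "j \<in> S" for j
  proof -
    have "(\<Sum>q\<in>UNIV. rho_star $ q * coh j q)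
        = ball_sum $ j + (\<Sum>q\<in>-near j. rho_star $ q * coh j q)"
      using that sum.Int_Diff[of UNIV _ "near j"] by (simp add: ball_sum_def Compl_eq_Diff_UNIV)
    then have "rho $ j - ball_sum $ j
        = (\<Sum>q\<in>-near j. rho_star $ q * coh j q) - (\<Sum>k\<in>S - {j}. rho $ k * coh j k)"
      using row_identity[OF that] by simp
    then show ?thesis
      using norm_diff_sums_le[of "\<lambda>q. rho_star $ q * coh j q" "- near j" "\<lambda>k. rho $ k * coh j k" "S - {j}"]
        by (simp add: norm_mult)
  qed
  have far: "(\<Sum>j\<in>S. \<Sum>q\<in>-near j. norm (rho_star $ q) * norm (coh j q))
      \<le> \<I> * l1norm rho_star + (1 - r) * outside_mass"
  proof -
    have "(\<Sum>j\<in>S. \<Sum>q\<in>-near j. norm (rho_star $ q) * norm (coh j q))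
        = (\<Sum>q\<in>UNIV. norm (rho_star $ q) * (\<Sum>j\<in>{j\<in>S. q \<notin> near j}. norm (coh j q)))"
      using sum.swap_restrict[of S UNIV "\<lambda>j q. norm (rho_star $ q) * norm (coh j q)"
          "\<lambda>j q. q \<notin> near j"]
      by (simp add: Compl_eq sum_distrib_left)
    also have "\<dots> \<le> (\<Sum>q\<in>UNIV. norm (rho_star $ q) * (\<I> + (1 - r) * of_bool (outside q)))"
      by (intro sum_mono mult_left_mono column_sum_far_le) auto
    also have "\<dots> = (\<Sum>q\<in>UNIV. \<I> * norm (rho_star $ q)
                        + (1 - r) * (norm (rho_star $ q) * of_bool (outside q)))"
      by (intro sum.cong refl) (simp only: algebra_simps)
    also have "\<dots> = \<I> * l1norm rho_star + (1 - r) * outside_mass"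
      by (simp only: l1norm_def outside_mass_def sum.distrib sum_distrib_left)
    finally show ?thesis .
  qed
  have "l1norm (rho - ball_sum) = (\<Sum>j\<in>S. norm (rho $ j - ball_sum $ j))"
    using l1norm_eq_sum_support[of S "rho - ball_sum"] by (simp add: supp ball_sum_def)
  also have "\<dots> \<le> (\<Sum>j\<in>S. \<Sum>q\<in>-near j. norm (rho_star $ q) * norm (coh j q))
        + (\<Sum>j\<in>S. \<Sum>k\<in>S - {j}. norm (rho $ k) * norm (coh j k))"
    unfolding sum.distrib[symmetric] by (intro sum_mono row)
  finally show ?thesis using far cross_sum_le by linarith
qed

lemma l1norm_le:
  "l1norm rho \<le> (\<I> + 1) * l1norm rho_star - r * outside_mass + \<I> * l1norm rho"
proof -
  have row: "norm (rho $ j)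
      \<le> (\<Sum>q\<in>UNIV. norm (rho_star $ q) * norm (coh j q))
        + (\<Sum>k\<in>S - {j}. norm (rho $ k) * norm (coh j k))" if "j \<in> S" for j
    unfolding row_identity[OF that]
    using norm_diff_sums_le[of "\<lambda>q. rho_star $ q * coh j q" UNIV "\<lambda>k. rho $ k * coh j k" "S - {j}"]
      by (simp add: norm_mult)
  have all: "(\<Sum>j\<in>S. \<Sum>q\<in>UNIV. norm (rho_star $ q) * norm (coh j q))
      \<le> (\<I> + 1) * l1norm rho_star - r * outside_mass"
  proof -
    have "(\<Sum>j\<in>S. \<Sum>q\<in>UNIV. norm (rho_star $ q) * norm (coh j q))
        = (\<Sum>q\<in>UNIV. norm (rho_star $ q) * (\<Sum>j\<in>S. norm (coh j q)))"
      by (subst sum.swap) (simp add: sum_distrib_left)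
    also have "\<dots> \<le> (\<Sum>q\<in>UNIV. norm (rho_star $ q) * (\<I> + 1 - r * of_bool (outside q)))"
      by (intro sum_mono mult_left_mono column_sum_le) auto
    also have "\<dots> = (\<Sum>q\<in>UNIV. (\<I> + 1) * norm (rho_star $ q)
                        - r * (norm (rho_star $ q) * of_bool (outside q)))"
      by (intro sum.cong refl) (simp only: algebra_simps)
    also have "\<dots> = (\<I> + 1) * l1norm rho_star - r * outside_mass"
      by (simp only: l1norm_def outside_mass_def sum_subtractf sum_distrib_left)
    finally show ?thesis .
  qed
  have "l1norm rho = (\<Sum>j\<in>S. norm (rho $ j))"
    by (rule l1norm_eq_sum_support) (simp add: supp)
  also have "\<dots> \<le> (\<Sum>j\<in>S. \<Sum>q\<in>UNIV. norm (rho_star $ q) * norm (coh j q))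
        + (\<Sum>j\<in>S. \<Sum>k\<in>S - {j}. norm (rho $ k) * norm (coh j k))"
    unfolding sum.distrib[symmetric] by (intro sum_mono row)
  finally show ?thesis using all cross_sum_le by linarith
qed

end

lemma l1_error_estimate:
  fixes I r L Ls m E :: real
  assumes "0 \<le> I" "0 < r" "r \<le> 1" "Ls \<le> L"
    and E: "E \<le> I * Ls + (1 - r) * m + I * L"
    and L: "L \<le> (I + 1) * Ls - r * m + I * L"
  shows "E \<le> 2 * I / r * L"
proof -
  have ILs: "I * Ls \<le> I * L" using assms by (simp add: mult_left_mono)
  then have rm: "r * m \<le> 2 * I * L" using L \<open>Ls \<le> L\<close> by (simp add: algebra_simps)
  have "r * E \<le> r * (I * Ls + (1 - r) * m + I * L)"
    using E \<open>0 < r\<close> by (simp add: mult_left_mono)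
  also have "\<dots> = r * (I * Ls) + (1 - r) * (r * m) + r * (I * L)"
    by (simp add: algebra_simps)
  also have "\<dots> \<le> r * (I * L) + (1 - r) * (2 * I * L) + r * (I * L)"
    using ILs rm assms by (intro add_mono mult_left_mono) auto
  also have "\<dots> = 2 * I * L"
    by (simp add: algebra_simps)
  finally show ?thesis using \<open>0 < r\<close> by (simp add: pos_le_divide_eq mult.commute)
qed

theorem corollary1:
  fixes W :: "'a set" and g :: "'a \<Rightarrow> complex^'m" and z :: "'n::finite \<Rightarrow> 'a"
    and S :: "'n set" and rho rho_star :: "complex^'n" and r :: real
    and nn :: "'n \<Rightarrow> 'a"
  assumes g_unit: "\<And>y. y \<in> W \<Longrightarrow> norm (g y) = 1"
    and z_in: "\<And>j. z j \<in> W"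
    and z_inj: "inj z"
    and supp: "\<And>j. j \<notin> S \<Longrightarrow> rho $ j = 0"
    and r_pos: "0 < r" and r_lt1: "r < 1"
    and disj: "\<And>j k. j \<in> S \<Longrightarrow> k \<in> S \<Longrightarrow> j \<noteq> k \<Longrightarrow>
                 sball W g r (z j) \<inter> sball W g r (z k) = {}"
    and feas: "Gmat g z *v rho_star = Gmat g z *v rho"
    and minim: "\<And>x. Gmat g z *v x = Gmat g z *v rho \<Longrightarrow> l1norm rho_star \<le> l1norm x"
    and nn: "nearest_choice g z (z ` S) nn"
  shows "l1norm (rho - (\<chi> j. if j \<in> S then
              (\<Sum>q\<in>{q. z q \<in> sball W g r (z j)}. rho_star $ q * hip (g (z j)) (g (z q)))
            else 0))
         \<le> 2 * interaction g z (z ` S) nn / r * l1norm rho"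
proof -
  interpret l1_recovery W g z S r nn rho rho_star
    by unfold_locales (fact assms)+
  have "l1norm (rho - ball_sum) \<le> 2 * \<I> / r * l1norm rho"
    using interaction_nonneg r_pos r_lt1 minim[OF refl] l1norm_error_le l1norm_le
    by (intro l1_error_estimate) auto
  then show ?thesis
    unfolding ball_sum_def near_def coh_def .
qed

end
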